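(* Let $G$ and $H$ be graphs such that the direct product $G\times H$ is a balanced distance magic graph, and let $\ell$ be a balanced distance magic labeling of $G\times H$ in which $(g,h)$ and $(g',h)$ are twins and $(g,h')$ and $(g'',h')$ are twins, where $g''\neq g'$. Let $\widehat\ell$ be obtained from $\ell$ by exchanging the labels of $(g',h')$ and $(g'',h')$, i.e. $\widehat\ell(g',h')=\ell(g'',h')$, $\widehat\ell(g'',h')=\ell(g',h')$, and $\widehat\ell(a,b)=\ell(a,b)$ for all other vertices. Then $\widehat\ell$ is a balanced distance magic labeling of $G\times H$ in which $(g,h')$ and $(g',h')$ are twins.
   Context: All graphs are finite and simple. For a graph $G$ and vertex $x$, $N(x)=N_G(x)$ is the (open) neighborhood of $x$. A distance magic labeling of a graph $G$ of order $N$ is a bijection $\ell\colon V(G)\to\{1,\dots,N\}$ for which there is a constant $k$ such that the weight $w(x)=\sum_{y\in N(x)}\ell(y)$ equals $k$ for every $x\in V(G)$. A balanced distance magic labeling of a graph $G$ with an even number $N$ of vertices is a distance magic labeling $\ell$ such that for every $w\in V(G)$: whenever $u\in N(w)$ has $\ell(u)=i$, there is $v\in N(w)$ with $\ell(v)=N+1-i$. Under such $\ell$, the vertices labeled $i$ and $N+1-i$ are called twins (with respect to $\ell$). $G$ is a balanced distance magic graph if it has an even number of vertices and admits a balanced distance magic labeling. The direct product $G\times H$ has vertex set $V(G)\times V(H)$, with $(g,h)$ adjacent to $(g',h')$ iff $gg'\in E(G)$ and $hh'\in E(H)$. *)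

theory Defs
  imports Main
begin

definition simple_graph :: "'a set \<Rightarrow> ('a \<Rightarrow> 'a \<Rightarrow> bool) \<Rightarrow> bool" where
  "simple_graph V E \<longleftrightarrow> finite V \<and> (\<forall>x y. E x y \<longrightarrow> x \<in> V \<and> y \<in> V)
     \<and> (\<forall>x y. E x y \<longrightarrow> E y x) \<and> (\<forall>x. \<not> E x x)"

definition nbhd :: "'a set \<Rightarrow> ('a \<Rightarrow> 'a \<Rightarrow> bool) \<Rightarrow> 'a \<Rightarrow> 'a set" where
  "nbhd V E x = {y \<in> V. E x y}"

definition distance_magic_labeling :: "'a set \<Rightarrow> ('a \<Rightarrow> 'a \<Rightarrow> bool) \<Rightarrow> ('a \<Rightarrow> nat) \<Rightarrow> bool" where
  "distance_magic_labeling V E l \<longleftrightarrow> bij_betw l V {1..card V}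
     \<and> (\<exists>k. \<forall>x\<in>V. (\<Sum>y\<in>nbhd V E x. l y) = k)"

definition balanced_dml :: "'a set \<Rightarrow> ('a \<Rightarrow> 'a \<Rightarrow> bool) \<Rightarrow> ('a \<Rightarrow> nat) \<Rightarrow> bool" where
  "balanced_dml V E l \<longleftrightarrow> even (card V) \<and> distance_magic_labeling V E l
     \<and> (\<forall>w\<in>V. \<forall>u\<in>nbhd V E w. \<exists>v\<in>nbhd V E w. l v = card V + 1 - l u)"

definition balanced_dm_graph :: "'a set \<Rightarrow> ('a \<Rightarrow> 'a \<Rightarrow> bool) \<Rightarrow> bool" where
  "balanced_dm_graph V E \<longleftrightarrow> even (card V) \<and> (\<exists>l. balanced_dml V E l)"

definition twins :: "'a set \<Rightarrow> ('a \<Rightarrow> nat) \<Rightarrow> 'a \<Rightarrow> 'a \<Rightarrow> bool" where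
  "twins V l x y \<longleftrightarrow> x \<in> V \<and> y \<in> V \<and> l x + l y = card V + 1"

definition dprod_edge :: "('a \<Rightarrow> 'a \<Rightarrow> bool) \<Rightarrow> ('b \<Rightarrow> 'b \<Rightarrow> bool) \<Rightarrow> 'a \<times> 'b \<Rightarrow> 'a \<times> 'b \<Rightarrow> bool" where
  "dprod_edge EG EH p q \<longleftrightarrow> EG (fst p) (fst q) \<and> EH (snd p) (snd q)"

end

theory Submission
  imports Defs "HOL-Combinatorics.Transposition"
begin

text \<open>
  In a balanced distance magic labeling, twins have the same neighbourhood:
  a neighbour of one twin forces, by balance and injectivity of the labeling, the other twin
  into the same neighbourhood.  Exchanging the labels of two vertices with equal
  neighbourhoods is a relabeling along a neighbourhood-preserving permutation, and such
  relabelings preserve balanced distance magic labelings.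

  In the direct product the neighbourhood of (a,b) is N(a) \<times> N(b).  From the twins (g,h),
  (g',h) we get N(g) = N(g') (provided h has a neighbour), and from the twins (g,h'),
  (g'',h') we get N(g) \<times> N(h') = N(g'') \<times> N(h'); hence (g',h') and (g'',h') have equal
  neighbourhoods and may exchange labels.  If h has no neighbour, (g,h) has weight 0, which
  forces G \<times> H to have no edges at all and the exchange is harmless.  Finally, twins are
  distinct since N+1 is odd, so the exchange does not touch (g,h') and makes it a twin of
  (g',h').
\<close>

lemma twins_distinct:
  assumes "even (card V)" "twins V l x y"
  shows "x \<noteq> y"
proof
  assume "x = y"
  with assms(2) have "2 * l x = card V + 1" unfolding twins_def by simp
  with assms(1) show False by presburger
qed

lemma balanced_twin_adjacent:
  assumes bal: "balanced_dml V E l" and tw: "twins V l x y"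
    and w: "w \<in> V" and wx: "E w x"
  shows "E w y"
proof -
  have inj: "inj_on l V"
    using bal unfolding balanced_dml_def distance_magic_labeling_def
    by (auto dest: bij_betw_imp_inj_on)
  have "x \<in> nbhd V E w" using tw wx unfolding nbhd_def twins_def by auto
  then obtain v where v: "v \<in> nbhd V E w" "l v = card V + 1 - l x"
    using bal w unfolding balanced_dml_def by blast
  have "l v = l y" "v \<in> V" "y \<in> V" using v tw unfolding twins_def nbhd_def by auto
  with inj have "v = y" by (auto dest: inj_onD)
  with v(1) show ?thesis unfolding nbhd_def by auto
qed

lemma balanced_twins_same_neighbours:
  assumes "balanced_dml V E l" "twins V l x y" "w \<in> V"
  shows "E w x \<longleftrightarrow> E w y"
proof -
  have "twins V l y x" using assms(2) unfolding twins_def by auto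
  then show ?thesis using balanced_twin_adjacent assms by metis
qed

text \<open>All labels are positive, so a vertex of weight 0 (an isolated vertex) forces every
  weight, hence every neighbourhood, to be empty.\<close>
lemma dml_isolated_vertex_no_edges:
  assumes dml: "distance_magic_labeling V E l" and fin: "finite V"
    and w: "w \<in> V" "nbhd V E w = {}" and x: "x \<in> V"
  shows "nbhd V E x = {}"
proof -
  obtain k where k: "\<forall>v\<in>V. (\<Sum>y\<in>nbhd V E v. l y) = k"
    using dml unfolding distance_magic_labeling_def by blast
  have "k = 0" using k w by force
  then have "(\<Sum>y\<in>nbhd V E x. l y) = 0" using k x by blast
  moreover have "finite (nbhd V E x)" using fin unfolding nbhd_def by auto
  ultimately have "\<forall>y\<in>nbhd V E x. l y = 0" by simp
  moreover have "\<forall>y\<in>V. l y \<ge> 1"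
    using dml unfolding distance_magic_labeling_def bij_betw_def by auto
  ultimately show ?thesis unfolding nbhd_def by fastforce
qed

text \<open>Composing a balanced labeling with a permutation of V that maps every neighbourhood
  onto itself yields again a balanced labeling: weights are sums over the same sets, and the
  twin of a label is found by pulling the old twin back along the permutation.\<close>
lemma balanced_dml_comp_nbhd_preserving:
  assumes bal: "balanced_dml V E l" and s: "bij_betw s V V"
    and nb: "\<And>w. w \<in> V \<Longrightarrow> s ` nbhd V E w = nbhd V E w"
  shows "balanced_dml V E (l \<circ> s)"
proof -
  have ev: "even (card V)" and bij: "bij_betw l V {1..card V}"
    and magic: "\<exists>k. \<forall>w\<in>V. (\<Sum>y\<in>nbhd V E w. l y) = k"
    and twin: "\<forall>w\<in>V. \<forall>u\<in>nbhd V E w. \<exists>v\<in>nbhd V E w. l v = card V + 1 - l u"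
    using bal unfolding balanced_dml_def distance_magic_labeling_def by auto
  have weight: "(\<Sum>y\<in>nbhd V E w. (l \<circ> s) y) = (\<Sum>y\<in>nbhd V E w. l y)" if "w \<in> V" for w
  proof -
    have "inj_on s (nbhd V E w)"
      using bij_betw_imp_inj_on[OF s] by (rule inj_on_subset) (auto simp: nbhd_def)
    then have "(\<Sum>y\<in>nbhd V E w. (l \<circ> s) y) = (\<Sum>y\<in>s ` nbhd V E w. l y)"
      by (simp add: sum.reindex)
    then show ?thesis using nb[OF that] by simp
  qed
  have "\<exists>v\<in>nbhd V E w. (l \<circ> s) v = card V + 1 - (l \<circ> s) u"
    if w: "w \<in> V" and u: "u \<in> nbhd V E w" for w u
  proof -
    have "s u \<in> nbhd V E w" using nb[OF w] u by blast
    then obtain v where v: "v \<in> nbhd V E w" "l v = card V + 1 - l (s u)"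
      using twin w by blast
    then obtain v' where "v' \<in> nbhd V E w" "v = s v'" using nb[OF w] by blast
    with v show ?thesis by auto
  qed
  moreover have "bij_betw (l \<circ> s) V {1..card V}" using bij_betw_trans[OF s bij] .
  ultimately show ?thesis
    using ev magic weight unfolding balanced_dml_def distance_magic_labeling_def by simp
qed

lemma balanced_dml_swap:
  assumes bal: "balanced_dml V E l" and pq: "p \<in> V" "q \<in> V"
    and same: "\<forall>w\<in>V. E w p \<longleftrightarrow> E w q"
  shows "balanced_dml V E (l(p := l q, q := l p))"
proof -
  have "l(p := l q, q := l p) = l \<circ> transpose p q"
    by (simp add: fun_eq_iff transpose_def)
  moreover have "bij_betw (transpose p q) V V" using pq by simp
  moreover have "transpose p q ` nbhd V E w = nbhd V E w" if "w \<in> V" for w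
    using pq same that by (intro transpose_image_eq) (auto simp: nbhd_def)
  ultimately show ?thesis using balanced_dml_comp_nbhd_preserving[OF bal] by metis
qed

lemma dprod_same_neighbours_first:
  assumes same: "\<forall>w\<in>VG \<times> VH. dprod_edge EG EH w (a, b) \<longleftrightarrow> dprod_edge EG EH w (a', b)"
    and c: "c \<in> VH" "EH c b" and x: "x \<in> VG"
  shows "EG x a \<longleftrightarrow> EG x a'"
  using same[rule_format, of "(x, c)"] c x unfolding dprod_edge_def by simp

text \<open>The exchange criterion of the theorem: if (g,h),(g',h) have equal neighbourhoods,
  (g,h'),(g'',h') have equal neighbourhoods and h is not isolated, then (g',h') and
  (g'',h') have equal neighbourhoods, as N(g') \<times> N(h') = N(g) \<times> N(h') = N(g'') \<times> N(h').\<close>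
lemma dprod_exchange_same_neighbours:
  assumes same_h: "\<forall>w\<in>VG \<times> VH. dprod_edge EG EH w (g, h) \<longleftrightarrow> dprod_edge EG EH w (g', h)"
    and same_h': "\<forall>w\<in>VG \<times> VH. dprod_edge EG EH w (g, h') \<longleftrightarrow> dprod_edge EG EH w (g'', h')"
    and c: "c \<in> VH" "EH c h"
  shows "\<forall>w\<in>VG \<times> VH. dprod_edge EG EH w (g', h') \<longleftrightarrow> dprod_edge EG EH w (g'', h')"
proof
  fix w assume w: "w \<in> VG \<times> VH"
  have "EG (fst w) g' \<longleftrightarrow> EG (fst w) g"
    using dprod_same_neighbours_first[OF same_h c] w by auto
  then have "dprod_edge EG EH w (g', h') \<longleftrightarrow> dprod_edge EG EH w (g, h')"
    unfolding dprod_edge_def by simp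
  with same_h' w show "dprod_edge EG EH w (g', h') \<longleftrightarrow> dprod_edge EG EH w (g'', h')" by blast
qed

theorem lemma3:
  fixes VG :: "'a set" and EG :: "'a \<Rightarrow> 'a \<Rightarrow> bool"
    and VH :: "'b set" and EH :: "'b \<Rightarrow> 'b \<Rightarrow> bool"
    and l :: "'a \<times> 'b \<Rightarrow> nat"
    and g g' g'' :: 'a and h h' :: 'b
  assumes "simple_graph VG EG" and "simple_graph VH EH"
    and "balanced_dm_graph (VG \<times> VH) (dprod_edge EG EH)"
    and "balanced_dml (VG \<times> VH) (dprod_edge EG EH) l"
    and "twins (VG \<times> VH) l (g, h) (g', h)"
    and "twins (VG \<times> VH) l (g, h') (g'', h')"
    and "g'' \<noteq> g'"
  shows "balanced_dml (VG \<times> VH) (dprod_edge EG EH)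
           (l((g', h') := l (g'', h'), (g'', h') := l (g', h')))
       \<and> twins (VG \<times> VH) (l((g', h') := l (g'', h'), (g'', h') := l (g', h'))) (g, h') (g', h')"
proof -
  let ?V = "VG \<times> VH" and ?E = "dprod_edge EG EH"
  let ?l' = "l((g', h') := l (g'', h'), (g'', h') := l (g', h'))"
  have bal: "balanced_dml ?V ?E l" by fact
  then have ev: "even (card ?V)" and dml: "distance_magic_labeling ?V ?E l"
    unfolding balanced_dml_def by auto
  have fin: "finite ?V" using assms(1,2) unfolding simple_graph_def by simp
  have in_V: "(g, h) \<in> ?V" "(g', h') \<in> ?V" "(g'', h') \<in> ?V"
    using assms(5,6) unfolding twins_def by auto
  have same_h: "\<forall>w\<in>?V. ?E w (g, h) \<longleftrightarrow> ?E w (g', h)"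
    using balanced_twins_same_neighbours[OF bal assms(5)] by blast
  have same_h': "\<forall>w\<in>?V. ?E w (g, h') \<longleftrightarrow> ?E w (g'', h')"
    using balanced_twins_same_neighbours[OF bal assms(6)] by blast
  have same: "\<forall>w\<in>?V. ?E w (g', h') \<longleftrightarrow> ?E w (g'', h')"
  proof (cases "\<exists>c\<in>VH. EH c h")
    case True
    then show ?thesis using dprod_exchange_same_neighbours[OF same_h same_h'] by blast
  next
    case False
    then have "nbhd ?V ?E (g, h) = {}"
      using assms(2) unfolding nbhd_def dprod_edge_def simple_graph_def by fastforce
    then have "\<forall>w\<in>?V. nbhd ?V ?E w = {}"
      using dml_isolated_vertex_no_edges[OF dml fin in_V(1)] by blast
    then show ?thesis using in_V unfolding nbhd_def by blast
  qed
  have "balanced_dml ?V ?E ?l'"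
    using balanced_dml_swap[OF bal in_V(2,3) same] .
  moreover have "g \<noteq> g'" "g \<noteq> g''"
    using twins_distinct[OF ev assms(5)] twins_distinct[OF ev assms(6)] by auto
  then have "twins ?V ?l' (g, h') (g', h')"
    using assms(6,7) in_V unfolding twins_def by auto
  ultimately show ?thesis by blast
qed

end
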